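(* Let $X=L^2(0,1)$ and let $C:X\to X$ be the Cesàro operator $[Cx](s)=\frac1s\int_0^s x(t)\,dt$, $0<s\le1$. Let $u\in L^2(0,1)$ be given by $u(t)=0$ for $0\le t<1/2$ and $u(t)=1$ for $1/2\le t\le1$. Then there is a constant $K>0$ such that for all sufficiently large $R>0$ $$d(R):=\min\{\|u-Cw\|_{L^2(0,1)}:\ w\in L^2(0,1),\ \|w\|_{L^2(0,1)}\le R\}\le\frac KR.$$
   Context: $C$ is a bounded, injective, monotone, non-compact linear operator on $L^2(0,1)$. The function $u$ plays the role of $x^\dagger-\bar x$. *)

theory Defs
  imports "HOL-Analysis.Analysis"
begin

text \<open>L^2(0,1), realised as (representatives of) real functions that are Lebesgue
measurable on [0,1] and square integrable there.\<close>
definition L2_01 :: "(real \<Rightarrow> real) set" where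
  "L2_01 = {w. w \<in> borel_measurable (lebesgue_on {0..1}) \<and>
               integrable (lebesgue_on {0..1}) (\<lambda>t. (w t)^2)}"

definition L2norm :: "(real \<Rightarrow> real) \<Rightarrow> real" where
  "L2norm w = sqrt (LINT t|lebesgue_on {0..1}. (w t)^2)"

definition cesaro :: "(real \<Rightarrow> real) \<Rightarrow> real \<Rightarrow> real" where
  "cesaro x s = (1 / s) * (LINT t|lebesgue_on {0..s}. x t)"

definition u_step :: "real \<Rightarrow> real" where
  "u_step t = (if t < 1/2 then 0 else 1)"

definition dR :: "real \<Rightarrow> real" where
  "dR R = Inf {L2norm (\<lambda>t. u_step t - cesaro w t) | w. w \<in> L2_01 \<and> L2norm w \<le> R}"

end

theory Submission imports Defs begin

text \<open>Approximate u by C w where w equals u plus a spike of height 1/(2d) on [1/2 - d, 1/2).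
The spike carries mass 1/2, exactly the mass u lacks on [0, 1/2], so C w = u for s \<ge> 1/2;
below 1/2 - d both vanish, and on the spike interval the residual is bounded by 2.
Hence the residual has norm at most 2 sqrt d while the norm of w is sqrt(1/(4d) + 1/2);
choosing d = 1/(2R^2) gives norm of w at most R and residual at most 2/R.\<close>

definition spiked_step :: "real \<Rightarrow> real \<Rightarrow> real" where
  "spiked_step d t = 1 / (2 * d) * indicator {1/2 - d..<1/2} t + indicator {1/2..1} t"

lemma integrable_indicator_lebesgue_on_Icc:
  fixes A :: "real set"
  assumes "A \<in> sets borel"
  shows "integrable (lebesgue_on {a..b}) (indicat_real A)"
proof -
  have "A \<inter> {a..b} \<in> sets (lebesgue_on {a..b})"
    using assms by (simp add: sets_restrict_space_iff)
  moreover have "emeasure (lebesgue_on {a..b}) (A \<inter> {a..b}) < \<infinity>"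
  proof -
    have "emeasure (lebesgue_on {a..b}) (A \<inter> {a..b}) = emeasure lebesgue (A \<inter> {a..b})"
      by (simp add: emeasure_restrict_space)
    also have "\<dots> \<le> emeasure lebesgue {a..b}"
      by (intro emeasure_mono) auto
    also have "\<dots> < \<infinity>"
      by (simp add: emeasure_lborel_Icc_eq)
    finally show ?thesis .
  qed
  ultimately show ?thesis
    by (simp add: integrable_indicator_iff)
qed

lemma integral_indicator_lebesgue_on_Icc:
  fixes A :: "real set"
  assumes "A \<in> sets borel"
  shows "(LINT t|lebesgue_on {a..b}. indicator A t) = measure lborel (A \<inter> {a..b})"
proof -
  have "(LINT t|lebesgue_on {a..b}. indicator A t) = measure (lebesgue_on {a..b}) (A \<inter> {a..b})"
    by simp
  also have "\<dots> = measure lebesgue (A \<inter> {a..b})"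
    by (subst measure_restrict_space) auto
  also have "\<dots> = measure lborel (A \<inter> {a..b})"
    using assms by simp
  finally show ?thesis .
qed

lemma borel_measurable_lebesgue_onI:
  "f \<in> borel_measurable borel \<Longrightarrow> f \<in> borel_measurable (lebesgue_on S)"
  by (intro measurable_restrict_space1 measurable_completion) simp

lemma integral_spiked_step_lebesgue_on:
  "(LINT t|lebesgue_on {0..s}. spiked_step d t) =
     1 / (2 * d) * measure lborel ({1/2 - d..<1/2} \<inter> {0..s}) + measure lborel ({1/2..1} \<inter> {0..s})"
  unfolding spiked_step_def
  by (subst Bochner_Integration.integral_add)
     (simp_all only: integrable_indicator_lebesgue_on_Icc integrable_mult_right
       integral_mult_right_zero integral_indicator_lebesgue_on_Icc sets_lborel atLeastLessThan_borel
       atLeastAtMost_borel)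

lemma residual_spiked_step:
  assumes d: "0 < d" "d \<le> 1/4" and s: "s \<le> 1"
  shows "u_step s - cesaro (spiked_step d) s =
           (if 1/2 - d \<le> s \<and> s < 1/2 then - ((s - (1/2 - d)) / (2 * d * s)) else 0)"
proof -
  note I = integral_spiked_step_lebesgue_on[of s d]
  consider "s < 1/2 - d" | "1/2 - d \<le> s" "s < 1/2" | "1/2 \<le> s" by linarith
  then show ?thesis
  proof cases
    case 1
    then have "{1/2 - d..<1/2} \<inter> {0..s} = {}" "{1/2..1} \<inter> {0..s} = {}" using d by auto
    then show ?thesis using 1 by (simp add: cesaro_def I u_step_def)
  next
    case 2
    then have "{1/2 - d..<1/2} \<inter> {0..s} = {1/2 - d..s}" "{1/2..1} \<inter> {0..s} = {}"
      using d by auto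
    then show ?thesis using 2 d by (simp add: cesaro_def I u_step_def)
  next
    case 3
    then have "{1/2 - d..<1/2} \<inter> {0..s} = {1/2 - d..<1/2}" "{1/2..1} \<inter> {0..s} = {1/2..s}"
      using d s by auto
    then show ?thesis using 3 d s by (simp add: cesaro_def I u_step_def field_simps)
  qed
qed

lemma spiked_step_in_L2_01_and_L2norm:
  assumes d: "0 < d" "d \<le> 1/4"
  shows "spiked_step d \<in> L2_01" "L2norm (spiked_step d) = sqrt (1 / (4 * d) + 1/2)"
proof -
  have square: "(spiked_step d t)^2 =
      (1 / (2 * d))^2 * indicat_real {1/2 - d..<1/2} t + indicat_real {1/2..1} t" for t
    using d by (auto simp: spiked_step_def indicator_def power2_eq_square)
  have "spiked_step d \<in> borel_measurable (lebesgue_on {0..1})"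
    unfolding spiked_step_def by (intro borel_measurable_lebesgue_onI) measurable
  moreover have "integrable (lebesgue_on {0..1}) (\<lambda>t. (spiked_step d t)^2)"
    unfolding square by (simp add: integrable_indicator_lebesgue_on_Icc)
  ultimately show "spiked_step d \<in> L2_01"
    by (simp add: L2_01_def)
  have "(LINT t|lebesgue_on {0..1}. (spiked_step d t)^2) =
      (1 / (2 * d))^2 * measure lborel ({1/2 - d..<1/2} \<inter> {0..1}) + measure lborel ({1/2..1} \<inter> {0..1::real})"
    unfolding square
    by (subst Bochner_Integration.integral_add)
       (simp_all only: integrable_indicator_lebesgue_on_Icc integrable_mult_right
         integral_mult_right_zero integral_indicator_lebesgue_on_Icc sets_lborel atLeastLessThan_borel
         atLeastAtMost_borel)
  moreover have "{1/2 - d..<1/2} \<inter> {0..1} = {1/2 - d..<1/2}" "{1/2..1} \<inter> {0..1} = {1/2..1::real}"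
    using d by auto
  ultimately have "(LINT t|lebesgue_on {0..1}. (spiked_step d t)^2) = 1 / (4 * d) + 1/2"
    using d by (simp add: power2_eq_square)
  then show "L2norm (spiked_step d) = sqrt (1 / (4 * d) + 1/2)"
    by (simp add: L2norm_def)
qed

lemma L2norm_residual_spiked_step:
  assumes d: "0 < d" "d \<le> 1/4"
  shows "L2norm (\<lambda>t. u_step t - cesaro (spiked_step d) t) \<le> 2 * sqrt d"
proof -
  define a where "a = 1/2 - d"
  define g where "g s = (if a \<le> s \<and> s < 1/2 then - ((s - a) / (2 * d * s)) else 0)" for s
  have residual: "(u_step s - cesaro (spiked_step d) s)^2 = (g s)^2" if "s \<in> {0..1}" for s
    using residual_spiked_step[OF d] that by (simp add: g_def a_def)
  have g_bound: "(g s)^2 \<le> 4 * indicat_real {a..<1/2} s" for s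
  proof (cases "a \<le> s \<and> s < 1/2")
    case True
    then have "s \<ge> 1/4" "s - a \<le> d" using d by (auto simp: a_def)
    then have "s - a \<le> 4 * (d * s)"
      using d mult_left_mono[of "1/4" s d] by linarith
    then have "(s - a) / (2 * d * s) \<le> 2" "0 \<le> (s - a) / (2 * d * s)"
      using True d by (auto simp: divide_le_eq)
    then have "((s - a) / (2 * d * s))^2 \<le> 2^2"
      by (intro power_mono) auto
    then show ?thesis using True by (simp add: g_def)
  qed (auto simp: g_def)
  have "(\<lambda>s. (g s)^2) = (\<lambda>s. ((s - a) / (2 * d * s))^2 * indicat_real {a..<1/2} s)"
    by (auto simp: g_def indicator_def fun_eq_iff)
  then have g_measurable: "(\<lambda>s. (g s)^2) \<in> borel_measurable (lebesgue_on {0..1})"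
    by (simp add: borel_measurable_lebesgue_onI)
  have g_integrable: "integrable (lebesgue_on {0..1}) (\<lambda>s. (g s)^2)"
    by (rule Bochner_Integration.integrable_bound[where f="\<lambda>s. 4 * indicat_real {a..<1/2} s"])
       (use g_measurable g_bound in \<open>auto simp: integrable_indicator_lebesgue_on_Icc\<close>)
  have "(LINT s|lebesgue_on {0..1}. (u_step s - cesaro (spiked_step d) s)^2) =
        (LINT s|lebesgue_on {0..1}. (g s)^2)"
    using residual by (intro Bochner_Integration.integral_cong) auto
  also have "\<dots> \<le> (LINT s|lebesgue_on {0..1}. 4 * indicat_real {a..<1/2} s)"
    using g_integrable g_bound
    by (intro Bochner_Integration.integral_mono) (auto simp: integrable_indicator_lebesgue_on_Icc)
  also have "\<dots> = 4 * d"
  proof -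
    have "{a..<1/2} \<inter> {0..1} = {a..<1/2}" using d by (auto simp: a_def)
    then have "measure lborel ({a..<1/2} \<inter> {0..1::real}) = d"
      using d by (simp add: a_def)
    then show ?thesis
      by (simp only: integral_mult_right_zero integral_indicator_lebesgue_on_Icc
          sets_lborel atLeastLessThan_borel)
  qed
  finally have "L2norm (\<lambda>t. u_step t - cesaro (spiked_step d) t) \<le> sqrt (4 * d)"
    by (simp add: L2norm_def)
  then show ?thesis
    by (simp add: real_sqrt_mult)
qed

lemma dR_le_residual:
  assumes "w \<in> L2_01" "L2norm w \<le> R"
  shows "dR R \<le> L2norm (\<lambda>t. u_step t - cesaro w t)"
  unfolding dR_def
proof (rule cInf_lower)
  show "bdd_below {L2norm (\<lambda>t. u_step t - cesaro w t) |w. w \<in> L2_01 \<and> L2norm w \<le> R}"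
    by (rule bdd_belowI[of _ 0]) (auto simp: L2norm_def)
qed (use assms in blast)

theorem proposition4p3:
  shows "\<exists>K>0. \<forall>\<^sub>F R in at_top. dR R \<le> K / R"
proof (intro exI[of _ 2] conjI)
  show "\<forall>\<^sub>F R in at_top. dR R \<le> 2 / R"
    unfolding eventually_at_top_linorder
  proof (intro exI[of _ 2] allI impI)
    fix R :: real
    assume R: "2 \<le> R"
    define d where "d = 1 / (2 * R^2)"
    have R2: "4 \<le> R^2"
      using power_mono[OF R, of 2] by simp
    have d: "0 < d" "d \<le> 1/4"
      using R R2 by (auto simp: d_def field_simps)
    have "L2norm (spiked_step d) \<le> R"
      using spiked_step_in_L2_01_and_L2norm(2)[OF d] R R2
      by (simp add: d_def real_le_lsqrt)
    then have "dR R \<le> L2norm (\<lambda>t. u_step t - cesaro (spiked_step d) t)"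
      by (intro dR_le_residual spiked_step_in_L2_01_and_L2norm(1)[OF d])
    also have "\<dots> \<le> 2 * sqrt d"
      by (rule L2norm_residual_spiked_step[OF d])
    also have "\<dots> \<le> 2 / R"
      using R by (simp add: d_def real_sqrt_divide real_sqrt_mult field_simps)
    finally show "dR R \<le> 2 / R" .
  qed
qed simp

end
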